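(* Let $\mathcal{C}\subseteq 2^{[n]}$ and $\mathcal{D}\subseteq 2^{[m]}$ be reduced codes and let $f:\mathcal{C}\to\mathcal{D}$ be an isomorphism. Then $n=m$ and $f$ is a permutation isomorphism: there is a permutation $w$ of $[n]$ with $f(c)=w(c)$ for all $c\in\mathcal{C}$.
   Context: A code is a subset $\mathcal{C}\subseteq 2^{[n]}$. For $\sigma\subseteq[n]$, $\mathrm{Tk}_{\mathcal{C}}(\sigma)=\{c\in\mathcal{C}\mid\sigma\subseteq c\}$, $\mathrm{Tk}_{\mathcal{C}}(i)=\mathrm{Tk}_{\mathcal{C}}(\{i\})$; a trunk in $\mathcal{C}$ is a subset that is empty or of this form. A morphism $f:\mathcal{C}\to\mathcal{D}$ is a function such that preimages of trunks in $\mathcal{D}$ are trunks in $\mathcal{C}$; an isomorphism is a morphism with an inverse function that is a morphism. A neuron $i$ is trivial if $\mathrm{Tk}_{\mathcal{C}}(i)=\emptyset$; a nontrivial neuron $i$ is redundant if $\mathrm{Tk}_{\mathcal{C}}(i)=\mathrm{Tk}_{\mathcal{C}}(\sigma)$ for some $\sigma$ with $i\notin\sigma$. A code $\mathcal{C}\subseteq 2^{[n]}$ is reduced if no $i\in[n]$ is trivial or redundant. For a permutation $w$ and $c\subseteq[n]$, $w(c)=\{w(i)\mid i\in c\}$. *)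

theory Defs
  imports "HOL-Combinatorics.Permutations"
begin

definition is_code :: "nat \<Rightarrow> nat set set \<Rightarrow> bool" where
  "is_code n C \<longleftrightarrow> C \<subseteq> Pow {1..n}"

definition Tk :: "nat set set \<Rightarrow> nat set \<Rightarrow> nat set set" where
  "Tk C \<sigma> = {c \<in> C. \<sigma> \<subseteq> c}"

definition is_trunk :: "nat \<Rightarrow> nat set set \<Rightarrow> nat set set \<Rightarrow> bool" where
  "is_trunk n C T \<longleftrightarrow> T = {} \<or> (\<exists>\<sigma>. \<sigma> \<subseteq> {1..n} \<and> T = Tk C \<sigma>)"

definition code_morphism ::
  "nat \<Rightarrow> nat set set \<Rightarrow> nat \<Rightarrow> nat set set \<Rightarrow> (nat set \<Rightarrow> nat set) \<Rightarrow> bool" where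
  "code_morphism n C m D f \<longleftrightarrow>
     (\<forall>c\<in>C. f c \<in> D) \<and>
     (\<forall>T. is_trunk m D T \<longrightarrow> is_trunk n C {c \<in> C. f c \<in> T})"

definition code_isomorphism ::
  "nat \<Rightarrow> nat set set \<Rightarrow> nat \<Rightarrow> nat set set \<Rightarrow> (nat set \<Rightarrow> nat set) \<Rightarrow> bool" where
  "code_isomorphism n C m D f \<longleftrightarrow>
     code_morphism n C m D f \<and>
     (\<exists>g. code_morphism m D n C g \<and> (\<forall>c\<in>C. g (f c) = c) \<and> (\<forall>d\<in>D. f (g d) = d))"

definition trivial_neuron :: "nat set set \<Rightarrow> nat \<Rightarrow> bool" where
  "trivial_neuron C i \<longleftrightarrow> Tk C {i} = {}"

definition redundant_neuron :: "nat \<Rightarrow> nat set set \<Rightarrow> nat \<Rightarrow> bool" where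
  "redundant_neuron n C i \<longleftrightarrow> \<not> trivial_neuron C i \<and>
     (\<exists>\<sigma>. \<sigma> \<subseteq> {1..n} \<and> i \<notin> \<sigma> \<and> Tk C {i} = Tk C \<sigma>)"

definition reduced_code :: "nat \<Rightarrow> nat set set \<Rightarrow> bool" where
  "reduced_code n C \<longleftrightarrow> is_code n C \<and>
     (\<forall>i\<in>{1..n}. \<not> trivial_neuron C i \<and> \<not> redundant_neuron n C i)"

end

theory Submission
  imports Defs
begin

text \<open>Pull the trunk of a neuron i of C back along the inverse g to a trunk \<open>Tk D \<sigma>\<close>, so that
  i fires in c exactly when \<open>\<sigma> \<subseteq> f c\<close>; then pull each \<open>Tk D {j}\<close>, \<open>j \<in> \<sigma>\<close>, back along f
  to a trunk \<open>Tk C \<tau>\<^sub>j\<close>. Together \<open>Tk C {i} = Tk C (\<Union>j\<in>\<sigma>. \<tau>\<^sub>j)\<close>, and since i is not redundant,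
  i lies in some \<open>\<tau>\<^sub>j\<close>; this j fires in f c exactly when i fires in c. The resulting
  correspondence of neurons is a bijection because reduced codes have pairwise distinct
  columns, and f acts on codewords by this bijection.\<close>

lemma code_morphism_pullback_Tk:
  assumes "code_morphism n C m D f" and "\<sigma> \<subseteq> {1..m}"
    and "c\<^sub>0 \<in> C" and "\<sigma> \<subseteq> f c\<^sub>0"
  obtains \<tau> where "\<tau> \<subseteq> {1..n}" and "\<forall>c\<in>C. \<sigma> \<subseteq> f c \<longleftrightarrow> \<tau> \<subseteq> c"
proof -
  have fD: "\<forall>c\<in>C. f c \<in> D"
    and "is_trunk n C {c \<in> C. f c \<in> Tk D \<sigma>}"
    using assms(1,2) unfolding code_morphism_def is_trunk_def by auto
  moreover have "c\<^sub>0 \<in> {c \<in> C. f c \<in> Tk D \<sigma>}"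
    using assms(3,4) fD unfolding Tk_def by auto
  ultimately obtain \<tau> where "\<tau> \<subseteq> {1..n}" "{c \<in> C. f c \<in> Tk D \<sigma>} = Tk C \<tau>"
    unfolding is_trunk_def by blast
  with fD show thesis
    by (intro that) (auto simp: Tk_def set_eq_iff)
qed

lemma reduced_code_mem_if_Tk_eq:
  assumes "reduced_code n C" and "i \<in> {1..n}" and "\<tau> \<subseteq> {1..n}"
    and "\<forall>c\<in>C. i \<in> c \<longleftrightarrow> \<tau> \<subseteq> c"
  shows "i \<in> \<tau>"
proof (rule ccontr)
  assume "i \<notin> \<tau>"
  moreover have "Tk C {i} = Tk C \<tau>"
    using assms(4) unfolding Tk_def by auto
  ultimately have "redundant_neuron n C i"
    using assms(1,2,3) unfolding reduced_code_def redundant_neuron_def by blast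
  with assms(1,2) show False
    unfolding reduced_code_def by blast
qed

lemma reduced_code_neuron_eqI:
  assumes "reduced_code n C" and "i \<in> {1..n}" and "i' \<in> {1..n}"
    and "\<forall>c\<in>C. i \<in> c \<longleftrightarrow> i' \<in> c"
  shows "i = i'"
  using reduced_code_mem_if_Tk_eq[of n C i "{i'}"] assms by auto

lemma code_morphism_neuron_image:
  assumes red: "reduced_code n C"
    and f: "code_morphism n C m D f" and g: "code_morphism m D n C g"
    and gf: "\<forall>c\<in>C. g (f c) = c"
    and i: "i \<in> {1..n}"
  shows "\<exists>j\<in>{1..m}. \<forall>c\<in>C. j \<in> f c \<longleftrightarrow> i \<in> c"
proof -
  have fD: "\<forall>c\<in>C. f c \<in> D"
    using f unfolding code_morphism_def by blast
  obtain c\<^sub>0 where c\<^sub>0: "c\<^sub>0 \<in> C" "i \<in> c\<^sub>0"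
    using red i unfolding reduced_code_def trivial_neuron_def Tk_def by blast
  obtain \<sigma> where \<sigma>: "\<sigma> \<subseteq> {1..m}" "\<forall>d\<in>D. {i} \<subseteq> g d \<longleftrightarrow> \<sigma> \<subseteq> d"
    using code_morphism_pullback_Tk[OF g, of "{i}" "f c\<^sub>0"] i c\<^sub>0 fD gf by auto
  have i_iff: "\<forall>c\<in>C. i \<in> c \<longleftrightarrow> \<sigma> \<subseteq> f c"
    using \<sigma>(2) fD gf by fastforce
  have "\<forall>j\<in>\<sigma>. \<exists>\<tau>. \<tau> \<subseteq> {1..n} \<and> (\<forall>c\<in>C. j \<in> f c \<longleftrightarrow> \<tau> \<subseteq> c)"
  proof
    fix j assume "j \<in> \<sigma>"
    then have "{j} \<subseteq> {1..m}" "{j} \<subseteq> f c\<^sub>0"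
      using \<sigma>(1) i_iff c\<^sub>0 by auto
    then show "\<exists>\<tau>. \<tau> \<subseteq> {1..n} \<and> (\<forall>c\<in>C. j \<in> f c \<longleftrightarrow> \<tau> \<subseteq> c)"
      using code_morphism_pullback_Tk[OF f _ c\<^sub>0(1)] by (metis insert_subset empty_subsetI)
  qed
  from bchoice[OF this] obtain \<tau>
    where \<tau>: "\<forall>j\<in>\<sigma>. \<tau> j \<subseteq> {1..n} \<and> (\<forall>c\<in>C. j \<in> f c \<longleftrightarrow> \<tau> j \<subseteq> c)" ..
  then have \<tau>_sub: "(\<Union>j\<in>\<sigma>. \<tau> j) \<subseteq> {1..n}"
    and \<tau>_iff: "\<And>j c. j \<in> \<sigma> \<Longrightarrow> c \<in> C \<Longrightarrow> j \<in> f c \<longleftrightarrow> \<tau> j \<subseteq> c"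
    by auto
  have "i \<in> c \<longleftrightarrow> (\<Union>j\<in>\<sigma>. \<tau> j) \<subseteq> c" if "c \<in> C" for c
  proof -
    have "i \<in> c \<longleftrightarrow> (\<forall>j\<in>\<sigma>. j \<in> f c)"
      using i_iff that by blast
    also have "\<dots> \<longleftrightarrow> (\<forall>j\<in>\<sigma>. \<tau> j \<subseteq> c)"
      using \<tau>_iff that by blast
    finally show ?thesis
      by blast
  qed
  then have "i \<in> (\<Union>j\<in>\<sigma>. \<tau> j)"
    using reduced_code_mem_if_Tk_eq[OF red i \<tau>_sub] by blast
  then obtain j where "j \<in> \<sigma>" "i \<in> \<tau> j"
    by blast
  then have "\<forall>c\<in>C. j \<in> f c \<longleftrightarrow> i \<in> c"
    using i_iff \<tau>_iff by blast
  with \<open>j \<in> \<sigma>\<close> \<sigma>(1) show ?thesis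
    by blast
qed

lemma code_isomorphism_neuron_bij:
  assumes redC: "reduced_code n C" and redD: "reduced_code m D"
    and iso: "code_isomorphism n C m D f"
  obtains w where "bij_betw w {1..n} {1..m}"
    and "\<forall>i\<in>{1..n}. \<forall>c\<in>C. w i \<in> f c \<longleftrightarrow> i \<in> c"
proof -
  obtain g where f: "code_morphism n C m D f" and g: "code_morphism m D n C g"
    and gf: "\<forall>c\<in>C. g (f c) = c" and fg: "\<forall>d\<in>D. f (g d) = d"
    using iso unfolding code_isomorphism_def by blast
  have fD: "\<forall>c\<in>C. f c \<in> D" and gC: "\<forall>d\<in>D. g d \<in> C"
    using f g unfolding code_morphism_def by blast+
  define w where "w i = (SOME j. j \<in> {1..m} \<and> (\<forall>c\<in>C. j \<in> f c \<longleftrightarrow> i \<in> c))" for i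
  have w: "w i \<in> {1..m} \<and> (\<forall>c\<in>C. w i \<in> f c \<longleftrightarrow> i \<in> c)" if "i \<in> {1..n}" for i
    unfolding w_def using code_morphism_neuron_image[OF redC f g gf that] by (rule someI2_bex)
  have "inj_on w {1..n}"
    by (rule inj_onI) (metis reduced_code_neuron_eqI[OF redC] w)
  moreover have "{1..m} \<subseteq> w ` {1..n}"
  proof
    fix j assume j: "j \<in> {1..m}"
    obtain i where i: "i \<in> {1..n}" and "\<forall>d\<in>D. i \<in> g d \<longleftrightarrow> j \<in> d"
      using code_morphism_neuron_image[OF redD g f fg j] by blast
    then have "\<forall>d\<in>D. j \<in> d \<longleftrightarrow> w i \<in> d"
      using w[OF i] fg gC by metis
    then have "j = w i"
      using reduced_code_neuron_eqI[OF redD j] w[OF i] by blast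
    with i show "j \<in> w ` {1..n}"
      by blast
  qed
  ultimately have "bij_betw w {1..n} {1..m}"
    using w by (auto simp: bij_betw_def)
  with w show thesis
    using that by blast
qed

lemma image_eq_if_bij_betw_mem_iff:
  assumes "bij_betw w A B" and "c \<subseteq> A" and "d \<subseteq> B"
    and "\<forall>i\<in>A. w i \<in> d \<longleftrightarrow> i \<in> c"
  shows "d = w ` c"
  using assms unfolding bij_betw_def by blast

theorem corollary3p3:
  fixes n m :: nat and C D :: "nat set set" and f :: "nat set \<Rightarrow> nat set"
  assumes "reduced_code n C" and "reduced_code m D"
    and "code_isomorphism n C m D f"
  shows "n = m \<and> (\<exists>w. w permutes {1..n} \<and> (\<forall>c\<in>C. f c = w ` c))"
proof -
  obtain w where w: "bij_betw w {1..n} {1..m}"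
    and mem_iff: "\<forall>i\<in>{1..n}. \<forall>c\<in>C. w i \<in> f c \<longleftrightarrow> i \<in> c"
    using code_isomorphism_neuron_bij[OF assms] .
  have "n = m"
    using bij_betw_same_card[OF w] by simp
  have C_sub: "\<forall>c\<in>C. c \<subseteq> {1..n}" and D_sub: "\<forall>d\<in>D. d \<subseteq> {1..m}"
    using assms(1,2) unfolding reduced_code_def is_code_def by blast+
  have fD: "\<forall>c\<in>C. f c \<in> D"
    using assms(3) by (simp add: code_isomorphism_def code_morphism_def)
  have "f c = restrict_id w {1..n} ` c" if "c \<in> C" for c
  proof -
    have "f c = w ` c"
      using that C_sub D_sub fD mem_iff by (intro image_eq_if_bij_betw_mem_iff[OF w]) auto
    also have "\<dots> = restrict_id w {1..n} ` c"
      using C_sub that by (intro image_cong) (auto simp: subset_iff)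
    finally show ?thesis .
  qed
  moreover have "restrict_id w {1..n} permutes {1..n}"
    using w \<open>n = m\<close> by (intro permutes_restrict_id) simp
  ultimately show ?thesis
    using \<open>n = m\<close> by blast
qed

end
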